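(* Let $\mathcal{P}_F$ be a quantitative definite clause specification in $\mathcal{R}(\mathcal{L})$, $\varphi$ an $\mathcal{L}$-constraint, $G$ a goal and $v$ a real number. Then $\varphi\ {}_v\!\!\rightarrow G$ is a logical consequence of $\mathcal{P}_F$ if and only if every minimal model $\mathcal{A}$ of $\mathcal{P}_F$ is a model of $\{\varphi\ {}_v\!\!\rightarrow G\}$.
   Context: A constraint language $\mathcal{L}$ consists of: a signature; a decidable infinite set $\mathsf{VAR}$ of variables; a decidable set of $\mathcal{L}$-constraints; a computable function $\mathsf{V}$ giving each constraint $\phi$ a finite set $\mathsf{V}(\phi)$ of variables; a nonempty set of $\mathcal{L}$-interpretations $\mathcal{I}$, each with nonempty domain $\mathcal{D}$ and set $\mathsf{ASS}$ of assignments $\mathsf{VAR}\to\mathcal{D}$; and solution sets $[\![\phi]\!]^{\mathcal{I}}\subseteq\mathsf{ASS}$ depending only on the values of variables in $\mathsf{V}(\phi)$. $\mathcal{R}(\mathcal{L})$ adds relation symbols $\mathcal{R}$ with arities; an atom is $r(\vec x)$ with $\vec x$ a tuple of pairwise distinct variables of the right length. A quantitative definite clause specification $\mathcal{P}_F$ is a finite set of clauses $r(\vec{x})\leftarrow_f \phi \,\&\, q_1(\vec{x}_1)\,\&\ldots\&\, q_k(\vec{x}_k)$ ($r(\vec x),q_j(\vec x_j)$ atoms, $\phi$ an $\mathcal{L}$-constraint, $k\ge0$, $f\in(0,1]$). An $\mathcal{R}(\mathcal{L})$-interpretation $\mathcal{A}$ extending $\mathcal{I}$ has the domain of $\mathcal{I}$,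 agrees with $\mathcal{I}$ on $\mathcal{L}$-constraints, and assigns to each $n$-ary $r$ a membership function $\mu(\_\,;r^{\mathcal{A}}):\mathcal{D}^n\to[0,1]$. For interpretations extending the same $\mathcal{I}$ (base equivalent), $\mathcal{A}\subseteq\mathcal{A}'$ iff $\mu(\alpha(\vec x);r^{\mathcal{A}})\le\mu(\alpha(\vec x);r^{\mathcal{A}'})$ for all $r,\alpha,\vec x$. $\mathcal{A}$ (extending $\mathcal{I}$) is a model of $\mathcal{P}_F$ iff for each $\alpha\in\mathsf{ASS}$ and clause $r(\vec{x})\leftarrow_f \phi \,\&\, q_1(\vec{x}_1)\,\&\ldots\&\, q_k(\vec{x}_k)$ in $\mathcal{P}_F$: if $\alpha\in[\![\phi]\!]^{\mathcal{I}}$ then $\mu(\alpha(\vec x);r^{\mathcal{A}})\ge f\times\min\{\mu(\alpha(\vec x_j);q_j^{\mathcal{A}})\mid 1\le j\le k\}$ ($\min\emptyset=1$). A minimal model of $\mathcal{P}_F$ is, for some $\mathcal{L}$-interpretation $\mathcal{I}$, a model $\mathcal{A}$ of $\mathcal{P}_F$ extending $\mathcal{I}$ with $\mathcal{A}\subseteq\mathcal{B}$ for every model $\mathcal{B}$ of $\mathcal{P}_F$ extending $\mathcal{I}$. (Models of a single formula $r(\vec x)\leftarrow_f\varphi$ are defined by the same condition with $k=0$.) Goals are (by convention) of the form $G=r(\vec x)\,\&\,\phi$ with $r(\vec x)$ an atom and $\phi$ an $\mathcal{L}$-constraint. An interpretation $\mathcal{A}$ is a model of $\{\varphi\ {}_v\!\!\rightarrow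 r(\vec x)\,\&\,\phi\}$ iff $[\![\varphi]\!]^{\mathcal{A}}\subseteq[\![\phi]\!]^{\mathcal{A}}$ and $\mathcal{A}$ is a model of $\{r(\vec x)\leftarrow_v\varphi\}$. The formula $\varphi\ {}_v\!\!\rightarrow G$ is a logical consequence of $\mathcal{P}_F$ iff every model of $\mathcal{P}_F$ (over any $\mathcal{L}$-interpretation) is a model of $\{\varphi\ {}_v\!\!\rightarrow G\}$. *)

theory Defs
  imports Complex_Main
begin

text \<open>
  A constraint language L is given by
   C    :: 'c set                         the L-constraints,
   V    :: 'c => 'v set                    free variables of a constraint,
   Itp  :: 'i set                         the (nonempty) set of L-interpretations,
   Dom  :: 'i => 'd set                    the (nonempty) domain of each interpretation,
   Sol  :: 'i => 'c => ('v => 'd) set       solution sets.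
\<close>

definition ASS :: "('i \<Rightarrow> 'd set) \<Rightarrow> 'i \<Rightarrow> ('v \<Rightarrow> 'd) set" where
  "ASS Dom i = {\<alpha>. \<forall>x. \<alpha> x \<in> Dom i}"

definition constraint_language ::
  "'c set \<Rightarrow> ('c \<Rightarrow> 'v set) \<Rightarrow> 'i set \<Rightarrow> ('i \<Rightarrow> 'd set) \<Rightarrow> ('i \<Rightarrow> 'c \<Rightarrow> ('v \<Rightarrow> 'd) set) \<Rightarrow> bool" where
  "constraint_language C V Itp Dom Sol \<longleftrightarrow>
     infinite (UNIV :: 'v set) \<and>
     (\<forall>\<phi>\<in>C. finite (V \<phi>)) \<and>
     Itp \<noteq> {} \<and>
     (\<forall>i\<in>Itp. Dom i \<noteq> {}) \<and>
     (\<forall>i\<in>Itp. \<forall>\<phi>\<in>C. Sol i \<phi> \<subseteq> ASS Dom i) \<and>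
     (\<forall>i\<in>Itp. \<forall>\<phi>\<in>C. \<forall>\<alpha>\<in>ASS Dom i. \<forall>\<beta>\<in>ASS Dom i.
        (\<forall>x\<in>V \<phi>. \<alpha> x = \<beta> x) \<longrightarrow> (\<alpha> \<in> Sol i \<phi> \<longleftrightarrow> \<beta> \<in> Sol i \<phi>))"

definition is_atom :: "('r \<Rightarrow> nat) \<Rightarrow> 'r \<times> 'v list \<Rightarrow> bool" where
  "is_atom ar a \<longleftrightarrow> distinct (snd a) \<and> length (snd a) = ar (fst a)"

text \<open>A quantitative clause  r(x) <-_f phi & q1(x1) & ... & qk(xk)  is represented as
  (head, f, phi, [q1(x1),...,qk(xk)]).\<close>

type_synonym ('r, 'v, 'c) qclause = "('r \<times> 'v list) \<times> real \<times> 'c \<times> ('r \<times> 'v list) list"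

definition qdc_spec :: "'c set \<Rightarrow> ('r \<Rightarrow> nat) \<Rightarrow> ('r, 'v, 'c) qclause set \<Rightarrow> bool" where
  "qdc_spec C ar P \<longleftrightarrow> finite P \<and>
     (\<forall>(h, f, \<phi>, body) \<in> P. is_atom ar h \<and> \<phi> \<in> C \<and> 0 < f \<and> f \<le> 1 \<and>
        (\<forall>b\<in>set body. is_atom ar b))"

text \<open>An R(L)-interpretation extending the L-interpretation i: a membership function
  mu r (d1,...,dn) in [0,1] for every n-ary r and tuple in Dom i ^ n.\<close>

definition ext_interp :: "('i \<Rightarrow> 'd set) \<Rightarrow> ('r \<Rightarrow> nat) \<Rightarrow> 'i \<Rightarrow> ('r \<Rightarrow> 'd list \<Rightarrow> real) \<Rightarrow> bool" where
  "ext_interp Dom ar i \<mu> \<longleftrightarrow>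
     (\<forall>r ds. length ds = ar r \<and> set ds \<subseteq> Dom i \<longrightarrow> 0 \<le> \<mu> r ds \<and> \<mu> r ds \<le> 1)"

definition interp_le :: "'v itself \<Rightarrow> ('i \<Rightarrow> 'd set) \<Rightarrow> ('r \<Rightarrow> nat) \<Rightarrow> 'i \<Rightarrow>
    ('r \<Rightarrow> 'd list \<Rightarrow> real) \<Rightarrow> ('r \<Rightarrow> 'd list \<Rightarrow> real) \<Rightarrow> bool" where
  "interp_le (_ :: 'v itself) Dom ar i \<mu> \<mu>' \<longleftrightarrow>
     (\<forall>r. \<forall>\<alpha>\<in>(ASS Dom i :: ('v \<Rightarrow> 'd) set). \<forall>xs :: 'v list. is_atom ar (r, xs) \<longrightarrow> \<mu> r (map \<alpha> xs) \<le> \<mu>' r (map \<alpha> xs))"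

definition body_min :: "('r \<Rightarrow> 'd list \<Rightarrow> real) \<Rightarrow> ('v \<Rightarrow> 'd) \<Rightarrow> ('r \<times> 'v list) list \<Rightarrow> real" where
  "body_min \<mu> \<alpha> body = (if body = [] then 1 else Min ((\<lambda>(q, ys). \<mu> q (map \<alpha> ys)) ` set body))"

definition is_model :: "('i \<Rightarrow> 'd set) \<Rightarrow> ('i \<Rightarrow> 'c \<Rightarrow> ('v \<Rightarrow> 'd) set) \<Rightarrow> 'i \<Rightarrow>
    ('r \<Rightarrow> 'd list \<Rightarrow> real) \<Rightarrow> ('r, 'v, 'c) qclause set \<Rightarrow> bool" where
  "is_model Dom Sol i \<mu> P \<longleftrightarrow>
     (\<forall>((r, xs), f, \<phi>, body) \<in> P. \<forall>\<alpha>\<in>ASS Dom i.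
        \<alpha> \<in> Sol i \<phi> \<longrightarrow> \<mu> r (map \<alpha> xs) \<ge> f * body_min \<mu> \<alpha> body)"

definition is_minimal_model :: "'i set \<Rightarrow> ('i \<Rightarrow> 'd set) \<Rightarrow> ('i \<Rightarrow> 'c \<Rightarrow> ('v \<Rightarrow> 'd) set) \<Rightarrow>
    ('r \<Rightarrow> nat) \<Rightarrow> ('r, 'v, 'c) qclause set \<Rightarrow> 'i \<Rightarrow> ('r \<Rightarrow> 'd list \<Rightarrow> real) \<Rightarrow> bool" where
  "is_minimal_model Itp Dom (Sol :: 'i \<Rightarrow> 'c \<Rightarrow> ('v \<Rightarrow> 'd) set) ar P i \<mu> \<longleftrightarrow>
     i \<in> Itp \<and> ext_interp Dom ar i \<mu> \<and> is_model Dom Sol i \<mu> P \<and>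
     (\<forall>\<mu>'. ext_interp Dom ar i \<mu>' \<and> is_model Dom Sol i \<mu>' P \<longrightarrow> interp_le TYPE('v) Dom ar i \<mu> \<mu>')"

text \<open>A goal r(x) & psi is represented as ((r, x), psi).  Model of {phi v-> G}.\<close>

definition models_goal_formula :: "('i \<Rightarrow> 'd set) \<Rightarrow> ('i \<Rightarrow> 'c \<Rightarrow> ('v \<Rightarrow> 'd) set) \<Rightarrow> 'i \<Rightarrow>
    ('r \<Rightarrow> 'd list \<Rightarrow> real) \<Rightarrow> 'c \<Rightarrow> real \<Rightarrow> ('r \<times> 'v list) \<times> 'c \<Rightarrow> bool" where
  "models_goal_formula Dom Sol i \<mu> \<phi> v G \<longleftrightarrow>
     (case G of ((r, xs), \<psi>) \<Rightarrow>
        Sol i \<phi> \<subseteq> Sol i \<psi> \<and>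
        (\<forall>\<alpha>\<in>ASS Dom i. \<alpha> \<in> Sol i \<phi> \<longrightarrow> \<mu> r (map \<alpha> xs) \<ge> v))"

definition logical_consequence :: "'i set \<Rightarrow> ('i \<Rightarrow> 'd set) \<Rightarrow> ('i \<Rightarrow> 'c \<Rightarrow> ('v \<Rightarrow> 'd) set) \<Rightarrow>
    ('r \<Rightarrow> nat) \<Rightarrow> ('r, 'v, 'c) qclause set \<Rightarrow> 'c \<Rightarrow> real \<Rightarrow> ('r \<times> 'v list) \<times> 'c \<Rightarrow> bool" where
  "logical_consequence Itp Dom Sol ar P \<phi> v G \<longleftrightarrow>
     (\<forall>i\<in>Itp. \<forall>\<mu>. ext_interp Dom ar i \<mu> \<and> is_model Dom Sol i \<mu> P \<longrightarrow>
        models_goal_formula Dom Sol i \<mu> \<phi> v G)"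

end

theory Submission
  imports Defs
begin

(* The models of P_F extending a fixed L-interpretation are closed under pointwise infima,
   because body_min and multiplication by a weight f >= 0 are monotone; the constant-1
   interpretation is such a model, so every L-interpretation carries a least model. The goal
   condition only bounds membership degrees from below, so it is inherited by every larger
   model, and checking it on least models suffices. *)

lemma body_min_mono:
  assumes "\<forall>(q, ys)\<in>set body. \<mu> q (map \<alpha> ys) \<le> \<mu>' q (map \<alpha> ys)"
  shows "body_min \<mu> \<alpha> body \<le> body_min \<mu>' \<alpha> body"
proof (cases "body = []")
  case True
  then show ?thesis by (simp add: body_min_def)
next
  case False
  let ?S' = "(\<lambda>(q, ys). \<mu>' q (map \<alpha> ys)) ` set body"
  have "Min ?S' \<in> ?S'" using False by (intro Min_in) auto
  then obtain q ys where q: "(q, ys) \<in> set body" and min_eq: "Min ?S' = \<mu>' q (map \<alpha> ys)"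
    by auto
  have "Min ((\<lambda>(q, ys). \<mu> q (map \<alpha> ys)) ` set body) \<le> \<mu> q (map \<alpha> ys)"
    using q by (intro Min_le) force+
  also have "\<dots> \<le> \<mu>' q (map \<alpha> ys)" using assms q by auto
  finally show ?thesis using False min_eq by (simp add: body_min_def)
qed

lemma ext_interp_const_one: "ext_interp Dom ar i (\<lambda>r ds. 1)"
  unfolding ext_interp_def by simp

lemma is_model_const_one:
  assumes "qdc_spec C ar P"
  shows "is_model Dom Sol i (\<lambda>r ds. 1) P"
  using assms unfolding is_model_def qdc_spec_def body_min_def by fastforce

definition inf_interp :: "('i \<Rightarrow> 'd set) \<Rightarrow> ('r \<Rightarrow> nat) \<Rightarrow> 'i \<Rightarrow>
    ('r \<Rightarrow> 'd list \<Rightarrow> real) set \<Rightarrow> 'r \<Rightarrow> 'd list \<Rightarrow> real" where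
  "inf_interp Dom ar i M =
     (\<lambda>r ds. if length ds = ar r \<and> set ds \<subseteq> Dom i then INF \<mu>\<in>M. \<mu> r ds else 0)"

lemma inf_interp_lower:
  assumes "\<forall>\<mu>\<in>M. ext_interp Dom ar i \<mu>" and "\<mu> \<in> M"
    and "length ds = ar r" and "set ds \<subseteq> Dom i"
  shows "inf_interp Dom ar i M r ds \<le> \<mu> r ds"
proof -
  have "bdd_below ((\<lambda>\<mu>. \<mu> r ds) ` M)"
    using assms unfolding bdd_below_def ext_interp_def by blast
  then show ?thesis
    using assms by (simp add: inf_interp_def cInf_lower)
qed

lemma inf_interp_greatest:
  assumes "M \<noteq> {}" and "\<And>\<mu>. \<mu> \<in> M \<Longrightarrow> z \<le> \<mu> r ds"
    and "length ds = ar r" and "set ds \<subseteq> Dom i"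
  shows "z \<le> inf_interp Dom ar i M r ds"
  using assms by (auto simp: inf_interp_def intro!: cInf_greatest)

lemma ext_interp_inf_interp:
  assumes "M \<noteq> {}" and "\<forall>\<mu>\<in>M. ext_interp Dom ar i \<mu>"
  shows "ext_interp Dom ar i (inf_interp Dom ar i M)"
  unfolding ext_interp_def
proof (intro allI impI conjI)
  fix r ds assume ds: "length ds = ar r \<and> set ds \<subseteq> Dom i"
  then show "0 \<le> inf_interp Dom ar i M r ds"
    using assms by (intro inf_interp_greatest) (auto simp: ext_interp_def)
  from assms obtain \<mu> where "\<mu> \<in> M" by blast
  then have "inf_interp Dom ar i M r ds \<le> \<mu> r ds"
    using assms ds by (intro inf_interp_lower) auto
  also have "\<dots> \<le> 1" using \<open>\<mu> \<in> M\<close> assms ds unfolding ext_interp_def by blast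
  finally show "inf_interp Dom ar i M r ds \<le> 1" .
qed

lemma is_model_inf_interp:
  assumes P: "qdc_spec C ar P" and "M \<noteq> {}"
    and models: "\<forall>\<mu>\<in>M. ext_interp Dom ar i \<mu> \<and> is_model Dom Sol i \<mu> P"
  shows "is_model Dom Sol i (inf_interp Dom ar i M) P"
  unfolding is_model_def
proof clarsimp
  let ?\<mu>0 = "inf_interp Dom ar i M"
  fix r xs f \<phi> body \<alpha>
  assume clause: "((r, xs), f, \<phi>, body) \<in> P" and \<alpha>: "\<alpha> \<in> ASS Dom i" and sol: "\<alpha> \<in> Sol i \<phi>"
  have head: "is_atom ar (r, xs)" and "0 < f" and body: "\<forall>b\<in>set body. is_atom ar b"
    using P clause unfolding qdc_spec_def by fastforce+
  show "f * body_min ?\<mu>0 \<alpha> body \<le> ?\<mu>0 r (map \<alpha> xs)"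
  proof (rule inf_interp_greatest[OF \<open>M \<noteq> {}\<close>])
    fix \<mu> assume "\<mu> \<in> M"
    have "\<forall>(q, ys)\<in>set body. ?\<mu>0 q (map \<alpha> ys) \<le> \<mu> q (map \<alpha> ys)"
      using body models \<open>\<mu> \<in> M\<close> \<alpha>
      by (auto simp: is_atom_def ASS_def intro!: inf_interp_lower)
    then have "f * body_min ?\<mu>0 \<alpha> body \<le> f * body_min \<mu> \<alpha> body"
      using \<open>0 < f\<close> by (intro mult_left_mono body_min_mono) auto
    also have "\<dots> \<le> \<mu> r (map \<alpha> xs)"
      using models \<open>\<mu> \<in> M\<close> clause \<alpha> sol unfolding is_model_def by fastforce
    finally show "f * body_min ?\<mu>0 \<alpha> body \<le> \<mu> r (map \<alpha> xs)" .
  qed (use head \<alpha> in \<open>auto simp: is_atom_def ASS_def\<close>)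
qed

lemma minimal_model_exists:
  assumes P: "qdc_spec C ar P" and "i \<in> Itp"
  shows "\<exists>\<mu>. is_minimal_model Itp Dom (Sol :: 'i \<Rightarrow> 'c \<Rightarrow> ('v \<Rightarrow> 'd) set) ar P i \<mu>"
proof -
  define M where "M = {\<mu>. ext_interp Dom ar i \<mu> \<and> is_model Dom Sol i \<mu> P}"
  have "(\<lambda>r ds. 1) \<in> M"
    by (simp add: M_def ext_interp_const_one is_model_const_one[OF P])
  then have "M \<noteq> {}" by blast
  have "inf_interp Dom ar i M \<in> M"
    using ext_interp_inf_interp[OF \<open>M \<noteq> {}\<close>, of Dom ar i]
      is_model_inf_interp[OF P \<open>M \<noteq> {}\<close>, of Dom i Sol]
    by (simp add: M_def)
  moreover have "interp_le TYPE('v) Dom ar i (inf_interp Dom ar i M) \<mu>" if "\<mu> \<in> M" for \<mu>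
    unfolding interp_le_def is_atom_def
    using that by (auto simp: M_def ASS_def intro!: inf_interp_lower)
  ultimately show ?thesis
    unfolding is_minimal_model_def using \<open>i \<in> Itp\<close> by (auto simp: M_def)
qed

lemma models_goal_formula_mono:
  assumes "models_goal_formula Dom Sol i \<mu> \<phi> v ((r, xs), \<psi>)"
    and "interp_le TYPE('v) Dom ar i \<mu> \<mu>'" and "is_atom ar (r, xs)"
  shows "models_goal_formula Dom (Sol :: 'i \<Rightarrow> 'c \<Rightarrow> ('v \<Rightarrow> 'd) set) i \<mu>' \<phi> v ((r, xs), \<psi>)"
  using assms unfolding models_goal_formula_def interp_le_def
  by (fastforce intro: order_trans)

theorem proposition1:
  fixes C :: "'c set" and V :: "'c \<Rightarrow> 'v set" and Itp :: "'i set"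
    and Dom :: "'i \<Rightarrow> 'd set" and Sol :: "'i \<Rightarrow> 'c \<Rightarrow> ('v \<Rightarrow> 'd) set"
    and ar :: "'r \<Rightarrow> nat" and P :: "('r, 'v, 'c) qclause set"
    and \<phi> :: 'c and G :: "('r \<times> 'v list) \<times> 'c" and v :: real
  assumes "constraint_language C V Itp Dom Sol"
    and "qdc_spec C ar P"
    and "\<phi> \<in> C"
    and "is_atom ar (fst G)" and "snd G \<in> C"
  shows "logical_consequence Itp Dom Sol ar P \<phi> v G \<longleftrightarrow>
    (\<forall>i \<mu>. is_minimal_model Itp Dom Sol ar P i \<mu> \<longrightarrow> models_goal_formula Dom Sol i \<mu> \<phi> v G)"
proof
  assume "logical_consequence Itp Dom Sol ar P \<phi> v G"
  then show "\<forall>i \<mu>. is_minimal_model Itp Dom Sol ar P i \<mu> \<longrightarrow> models_goal_formula Dom Sol i \<mu> \<phi> v G"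
    unfolding logical_consequence_def is_minimal_model_def by blast
next
  assume minimal: "\<forall>i \<mu>. is_minimal_model Itp Dom Sol ar P i \<mu> \<longrightarrow> models_goal_formula Dom Sol i \<mu> \<phi> v G"
  obtain r xs \<psi> where G: "G = ((r, xs), \<psi>)" by (metis prod.collapse)
  show "logical_consequence Itp Dom Sol ar P \<phi> v G"
    unfolding logical_consequence_def
  proof (intro ballI allI impI)
    fix i \<mu> assume "i \<in> Itp" and model: "ext_interp Dom ar i \<mu> \<and> is_model Dom Sol i \<mu> P"
    obtain \<mu>0 where \<mu>0: "is_minimal_model Itp Dom Sol ar P i \<mu>0"
      using minimal_model_exists[OF assms(2) \<open>i \<in> Itp\<close>] by blast
    then have "interp_le TYPE('v) Dom ar i \<mu>0 \<mu>"
      using model unfolding is_minimal_model_def by blast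
    then show "models_goal_formula Dom Sol i \<mu> \<phi> v G"
      using minimal \<mu>0 assms(4) unfolding G by (auto intro: models_goal_formula_mono)
  qed
qed

end
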